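(* Let $H$ be a digraph (possibly with loops), let $D$ be an $H$-colored $3$-quasi-transitive digraph, let $k \geq 5$, and let $(u,v)$ be an arc of $C_{H}^{k-1}(D)$. If $(u,v)$ is an asymmetric arc of $C_{H}^{k-1}(D)$ (i.e., $(v,u)\notin A(C_{H}^{k-1}(D))$), then $d_{D}(u,v) \leq 2$.
   Context: All digraphs are finite. A digraph $D$ is $3$-quasi-transitive if for all distinct $u,v\in V(D)$, whenever there is a directed $uv$-path of length $3$, $u$ and $v$ are joined by an arc (in some direction). $d_D(u,v)$ is the length of a shortest directed $uv$-path in $D$. $D$ has no loops and comes with a map $\rho: A(D)\to V(H)$. For a walk $W=(x_0,\ldots,x_n)$ in $D$, there is an obstruction on $x_i$ if $(\rho(x_{i-1},x_i),\rho(x_i,x_{i+1})) \notin A(H)$; for an open walk this is considered at internal vertices $x_i$, $1\le i\le n-1$, for a closed walk at all $i\in\{0,\ldots,n-1\}$ with indices modulo $n$. $O_H(W)$ is the set of indices with an obstruction; the $H$-length is $l_H(W)=|O_H(W)|+1$ for open $W$ and $|O_H(W)|$ for closed $W$. The $(k-1,H)$-closure $C_H^{k-1}(D)$ is the digraph on $V(D)$ in which $(x,y)$ is an arc iff there is a directed $xy$-path in $D$ of $H$-length at most $k-1$. *)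

theory Defs
  imports Main
begin

definition dwalk :: "('a \<times> 'a) set \<Rightarrow> 'a list \<Rightarrow> bool" where
  "dwalk A p \<longleftrightarrow> p \<noteq> [] \<and> (\<forall>i. Suc i < length p \<longrightarrow> (p ! i, p ! Suc i) \<in> A)"

definition dpath :: "('a \<times> 'a) set \<Rightarrow> 'a list \<Rightarrow> bool" where
  "dpath A p \<longleftrightarrow> dwalk A p \<and> distinct p"

definition walk_len :: "'a list \<Rightarrow> nat" where
  "walk_len p = length p - 1"

definition three_quasi_transitive :: "'a set \<Rightarrow> ('a \<times> 'a) set \<Rightarrow> bool" where
  "three_quasi_transitive V A \<longleftrightarrow>
     (\<forall>u\<in>V. \<forall>v\<in>V. u \<noteq> v \<longrightarrow>
        (\<exists>p. dpath A p \<and> hd p = u \<and> last p = v \<and> walk_len p = 3) \<longrightarrow>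
        (u, v) \<in> A \<or> (v, u) \<in> A)"

definition obstructions_open ::
    "('b \<times> 'b) set \<Rightarrow> ('a \<times> 'a \<Rightarrow> 'b) \<Rightarrow> 'a list \<Rightarrow> nat set" where
  "obstructions_open AH \<rho> p =
     {i. 1 \<le> i \<and> Suc i < length p \<and>
         (\<rho> (p ! (i - 1), p ! i), \<rho> (p ! i, p ! Suc i)) \<notin> AH}"

definition H_length_open ::
    "('b \<times> 'b) set \<Rightarrow> ('a \<times> 'a \<Rightarrow> 'b) \<Rightarrow> 'a list \<Rightarrow> nat" where
  "H_length_open AH \<rho> p = card (obstructions_open AH \<rho> p) + 1"

definition H_closure_arcs ::
    "'a set \<Rightarrow> ('a \<times> 'a) set \<Rightarrow> ('b \<times> 'b) set \<Rightarrow> ('a \<times> 'a \<Rightarrow> 'b) \<Rightarrow> nat \<Rightarrow> ('a \<times> 'a) set" where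
  "H_closure_arcs V A AH \<rho> m =
     {(x, y). x \<in> V \<and> y \<in> V \<and> x \<noteq> y \<and>
        (\<exists>p. dpath A p \<and> hd p = x \<and> last p = y \<and> H_length_open AH \<rho> p \<le> m)}"

end

theory Submission
  imports Defs
begin

(*
  Let p = (p_0, ..., p_n) be a shortest directed uv-path; it has no forward chords.
  3-quasi-transitivity applied to p_i p_(i+1) p_(i+2) p_(i+3) yields the backward arc
  p_(i+3) -> p_i, and applied to p_j p_(i+2) p_(i+3) p_i it propagates to backward arcs over
  every odd gap j - i >= 3. So if n >= 3 there is a vu-path of length at most 4: the arc
  p_n p_0 for odd n, p_4 p_1 p_2 p_3 p_0 for n = 4, and p_n p_3 p_0 for even n >= 6. Since the
  H-length of a path never exceeds its length, (v, u) would then be an arc of the closure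
  as soon as k >= 5. Neither the colouring nor finiteness plays any further role.
*)

lemma dwalk_Nil [simp]: "\<not> dwalk A []"
  by (simp add: dwalk_def)

lemma dwalk_Cons: "dwalk A (x # xs) \<longleftrightarrow> xs = [] \<or> (x, hd xs) \<in> A \<and> dwalk A xs"
  unfolding dwalk_def by (cases xs) (auto simp: nth_Cons split: nat.splits)

lemma dwalk_Cons2 [simp]: "dwalk A (a # b # xs) \<longleftrightarrow> (a, b) \<in> A \<and> dwalk A (b # xs)"
  by (simp add: dwalk_Cons)

lemma dwalk_single [simp]: "dwalk A [a]"
  by (simp add: dwalk_Cons)

lemma dwalk_nth_arc: "dwalk A p \<Longrightarrow> Suc i < length p \<Longrightarrow> (p ! i, p ! Suc i) \<in> A"
  by (simp add: dwalk_def)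

lemma dwalk_append:
  "dwalk A xs \<Longrightarrow> dwalk A ys \<Longrightarrow> (last xs, hd ys) \<in> A \<Longrightarrow> dwalk A (xs @ ys)"
  by (induction xs rule: induct_list012) (auto simp: dwalk_Cons)

lemma dwalk_take: "dwalk A p \<Longrightarrow> 0 < n \<Longrightarrow> dwalk A (take n p)"
  unfolding dwalk_def by auto

lemma dwalk_drop: "dwalk A p \<Longrightarrow> n < length p \<Longrightarrow> dwalk A (drop n p)"
  unfolding dwalk_def by (auto simp: add.commute)

lemma H_length_open_le_walk_len:
  assumes "2 \<le> length p"
  shows "H_length_open AH \<rho> p \<le> walk_len p"
proof -
  have "obstructions_open AH \<rho> p \<subseteq> {1..<length p - 1}"
    unfolding obstructions_open_def by auto
  then have "card (obstructions_open AH \<rho> p) \<le> card {1..<length p - 1}"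
    by (intro card_mono) simp_all
  then have "card (obstructions_open AH \<rho> p) \<le> length p - 2"
    by simp
  then show ?thesis
    unfolding H_length_open_def walk_len_def using assms by linarith
qed

lemma H_closure_arcsI:
  assumes "x \<in> V" "y \<in> V" "x \<noteq> y"
    and "dpath A p" "hd p = x" "last p = y" "walk_len p \<le> m"
  shows "(x, y) \<in> H_closure_arcs V A AH \<rho> m"
proof -
  have "2 \<le> length p"
    using assms(3-6) by (cases p; cases "tl p") (auto simp: dpath_def)
  then have "H_length_open AH \<rho> p \<le> m"
    using H_length_open_le_walk_len assms(7) le_trans by blast
  then show ?thesis
    unfolding H_closure_arcs_def using assms by auto
qed

lemma three_quasi_transitiveD:
  assumes "three_quasi_transitive V A" "A \<subseteq> V \<times> V" "dpath A [a, b, c, d]"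
  shows "(a, d) \<in> A \<or> (d, a) \<in> A"
proof -
  have "a \<in> V" "d \<in> V" "a \<noteq> d"
    using assms(2,3) by (auto simp: dpath_def)
  moreover have "walk_len [a, b, c, d] = 3"
    by (simp add: walk_len_def)
  ultimately show ?thesis
    using assms(1,3) unfolding three_quasi_transitive_def
    by (metis last.simps list.sel(1) list.distinct(1))
qed

definition shortest_dpath :: "('a \<times> 'a) set \<Rightarrow> 'a \<Rightarrow> 'a \<Rightarrow> 'a list \<Rightarrow> bool" where
  "shortest_dpath A u v p \<longleftrightarrow> dpath A p \<and> hd p = u \<and> last p = v \<and>
     (\<forall>q. dpath A q \<and> hd q = u \<and> last q = v \<longrightarrow> length p \<le> length q)"

lemma shortest_dpath_exists:
  assumes "dpath A p" "hd p = u" "last p = v"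
  obtains s where "shortest_dpath A u v s"
  using ex_has_least_nat[of "\<lambda>q. dpath A q \<and> hd q = u \<and> last q = v" p length] assms
  unfolding shortest_dpath_def by blast

definition forward_chordless :: "('a \<times> 'a) set \<Rightarrow> 'a list \<Rightarrow> bool" where
  "forward_chordless A p \<longleftrightarrow> (\<forall>i j. Suc i < j \<longrightarrow> j < length p \<longrightarrow> (p ! i, p ! j) \<notin> A)"

lemma shortest_dpath_forward_chordless:
  assumes "shortest_dpath A u v p"
  shows "forward_chordless A p"
  unfolding forward_chordless_def
proof (intro allI impI notI)
  fix i j
  assume ij: "Suc i < j" "j < length p" and chord: "(p ! i, p ! j) \<in> A"
  have p: "dpath A p" "hd p = u" "last p = v"
    using assms by (auto simp: shortest_dpath_def)
  define q where "q = take (Suc i) p @ drop j p"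
  have "dwalk A q"
    unfolding q_def
  proof (rule dwalk_append)
    show "dwalk A (take (Suc i) p)" "dwalk A (drop j p)"
      using p(1) ij dwalk_take dwalk_drop by (auto simp: dpath_def)
    show "(last (take (Suc i) p), hd (drop j p)) \<in> A"
      using chord ij by (simp add: take_Suc_conv_app_nth hd_drop_conv_nth)
  qed
  moreover have "distinct q"
    unfolding q_def using p(1) ij by (simp add: dpath_def set_take_disj_set_drop_if_distinct)
  moreover have "hd q = u"
    unfolding q_def using p(2) ij by (cases p) auto
  moreover have "last q = v"
    unfolding q_def using p(3) ij by simp
  ultimately have "length p \<le> length q"
    using assms by (auto simp: shortest_dpath_def dpath_def)
  then show False
    unfolding q_def using ij by simp
qed

lemma forward_chordless_arc_back3:
  assumes "three_quasi_transitive V A" "A \<subseteq> V \<times> V" "dpath A p" "forward_chordless A p"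
    and "i + 3 < length p"
  shows "(p ! (i + 3), p ! i) \<in> A"
proof -
  have "(p ! i, p ! (i + 1)) \<in> A" "(p ! (i + 1), p ! (i + 2)) \<in> A"
    "(p ! (i + 2), p ! (i + 3)) \<in> A"
    using assms(3,5) dwalk_nth_arc[of A p i] dwalk_nth_arc[of A p "i + 1"]
      dwalk_nth_arc[of A p "i + 2"]
    by (simp_all add: dpath_def eval_nat_numeral)
  moreover have "distinct [p ! i, p ! (i + 1), p ! (i + 2), p ! (i + 3)]"
    using assms(3,5) by (simp add: dpath_def nth_eq_iff_index_eq)
  ultimately have "dpath A [p ! i, p ! (i + 1), p ! (i + 2), p ! (i + 3)]"
    by (simp add: dpath_def)
  then have "(p ! i, p ! (i + 3)) \<in> A \<or> (p ! (i + 3), p ! i) \<in> A"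
    by (rule three_quasi_transitiveD[OF assms(1,2)])
  then show ?thesis
    using assms(4,5) unfolding forward_chordless_def by auto
qed

lemma forward_chordless_arc_back_odd:
  assumes "three_quasi_transitive V A" "A \<subseteq> V \<times> V" "dpath A p" "forward_chordless A p"
  shows "i + 2 * m + 3 < length p \<Longrightarrow> (p ! (i + 2 * m + 3), p ! i) \<in> A"
proof (induction m arbitrary: i)
  case 0
  then show ?case
    using forward_chordless_arc_back3[OF assms] by simp
next
  case (Suc m)
  let ?j = "i + 2 * Suc m + 3"
  have "(p ! ?j, p ! (i + 2)) \<in> A"
    using Suc.IH[of "i + 2"] Suc.prems by (simp add: algebra_simps)
  moreover have "(p ! (i + 2), p ! (i + 3)) \<in> A"
    using dwalk_nth_arc[of A p "i + 2"] assms(3) Suc.prems by (simp add: dpath_def eval_nat_numeral)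
  moreover have "(p ! (i + 3), p ! i) \<in> A"
    using forward_chordless_arc_back3[OF assms] Suc.prems by simp
  ultimately have "dpath A [p ! ?j, p ! (i + 2), p ! (i + 3), p ! i]"
    using assms(3) Suc.prems by (auto simp: dpath_def nth_eq_iff_index_eq)
  then have "(p ! ?j, p ! i) \<in> A \<or> (p ! i, p ! ?j) \<in> A"
    by (rule three_quasi_transitiveD[OF assms(1,2)])
  then show ?case
    using assms(4) Suc.prems unfolding forward_chordless_def by auto
qed

lemma forward_chordless_short_return:
  assumes "three_quasi_transitive V A" "A \<subseteq> V \<times> V" "dpath A p" "forward_chordless A p"
    and "3 \<le> walk_len p"
  shows "\<exists>q. dpath A q \<and> hd q = last p \<and> last q = hd p \<and> walk_len q \<le> 4"
proof -
  define n where "n = walk_len p"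
  have "p \<noteq> []"
    using assms(3) by (auto simp: dpath_def)
  then have p: "length p = Suc n" "hd p = p ! 0" "last p = p ! n"
    unfolding n_def walk_len_def by (auto simp: hd_conv_nth last_conv_nth)
  have back3: "(p ! (i + 3), p ! i) \<in> A" if "i + 3 \<le> n" for i
    using forward_chordless_arc_back3[OF assms(1-4)] that p(1) by simp
  have back_odd: "(p ! (i + 2 * m + 3), p ! i) \<in> A" if "i + 2 * m + 3 \<le> n" for i m
    using forward_chordless_arc_back_odd[OF assms(1-4)] that p(1) by simp
  have distinct_nth: "p ! i \<noteq> p ! j" if "i \<noteq> j" "i \<le> n" "j \<le> n" for i j
    using assms(3) that p(1) by (simp add: dpath_def nth_eq_iff_index_eq)
  have "\<exists>m. n = 2 * m + 3 \<or> n = 4 \<or> n = 2 * m + 6"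
    using assms(5) unfolding n_def[symmetric] by presburger
  then consider (odd) m where "n = 2 * m + 3" | (four) "n = 4" | (even) m where "n = 2 * m + 6"
    by blast
  then show ?thesis
  proof cases
    case (odd m)
    then have "dpath A [p ! n, p ! 0]"
      using back_odd[of 0 m] distinct_nth[of n 0] by (simp add: dpath_def)
    then show ?thesis
      using p by (intro exI[of _ "[p ! n, p ! 0]"]) (simp add: walk_len_def)
  next
    case four
    have "(p ! 1, p ! 2) \<in> A" "(p ! 2, p ! 3) \<in> A"
      using dwalk_nth_arc[of A p 1] dwalk_nth_arc[of A p 2] assms(3) four p(1)
      by (simp_all add: dpath_def eval_nat_numeral)
    then have "dpath A [p ! 4, p ! 1, p ! 2, p ! 3, p ! 0]"
      using back3[of 1] back3[of 0] four by (simp add: dpath_def distinct_nth)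
    then show ?thesis
      using p four by (intro exI[of _ "[p ! 4, p ! 1, p ! 2, p ! 3, p ! 0]"]) (simp add: walk_len_def)
  next
    case (even m)
    have "dpath A [p ! n, p ! 3, p ! 0]"
      using back_odd[of 3 m] back3[of 0] distinct_nth[of n 3] distinct_nth[of n 0] distinct_nth[of 3 0] even
      by (simp add: dpath_def algebra_simps)
    then show ?thesis
      using p by (intro exI[of _ "[p ! n, p ! 3, p ! 0]"]) (simp add: walk_len_def)
  qed
qed

theorem corollary18:
  fixes V :: "'a set" and A :: "('a \<times> 'a) set"
    and VH :: "'b set" and AH :: "('b \<times> 'b) set"
    and \<rho> :: "'a \<times> 'a \<Rightarrow> 'b" and k :: nat and u v :: 'a
  assumes "finite V" and "A \<subseteq> V \<times> V" and "\<forall>x. (x, x) \<notin> A"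
    and "finite VH" and "AH \<subseteq> VH \<times> VH"
    and "\<forall>a\<in>A. \<rho> a \<in> VH"
    and "three_quasi_transitive V A"
    and "k \<ge> 5"
    and "(u, v) \<in> H_closure_arcs V A AH \<rho> (k - 1)"
    and "(v, u) \<notin> H_closure_arcs V A AH \<rho> (k - 1)"
  shows "\<exists>p. dpath A p \<and> hd p = u \<and> last p = v \<and> walk_len p \<le> 2"
proof (rule ccontr)
  assume no_short_path: "\<not> ?thesis"
  obtain p0 where uv: "u \<in> V" "v \<in> V" "u \<noteq> v"
    and p0: "dpath A p0" "hd p0 = u" "last p0 = v"
    using assms(9) by (auto simp: H_closure_arcs_def)
  obtain p where p: "shortest_dpath A u v p"
    using shortest_dpath_exists[OF p0] .
  then have "dpath A p" "hd p = u" "last p = v"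
    by (simp_all add: shortest_dpath_def)
  moreover have "3 \<le> walk_len p"
    using no_short_path \<open>dpath A p\<close> \<open>hd p = u\<close> \<open>last p = v\<close> by force
  ultimately obtain q where "dpath A q" "hd q = v" "last q = u" "walk_len q \<le> 4"
    using forward_chordless_short_return[OF assms(7,2)] shortest_dpath_forward_chordless[OF p]
    by metis
  moreover have "walk_len q \<le> k - 1"
    using \<open>walk_len q \<le> 4\<close> assms(8) by linarith
  ultimately have "(v, u) \<in> H_closure_arcs V A AH \<rho> (k - 1)"
    using H_closure_arcsI uv by metis
  then show False
    using assms(10) by contradiction
qed

end
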